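(* (1) Let $a_{n,j}=2^j\binom nj$ for integers $n\geq 3$, $0\leq j\leq n$. Then for all integers $m\geq2$ and $0\leq l\leq m-1$, $$\frac{a_{3m-3,\,3m-l-3}}{a_{3m-3,\,l+m-1}}\leq\frac{a_{3m-2,\,3m-l-2}}{a_{3m-2,\,l+m-1}}\leq\frac{a_{3m-1,\,3m-l-1}}{a_{3m-1,\,l+m-1}}\leq 9.$$ (2) Let $a_{n,j}=3^j\binom nj$ for integers $n\geq2$, $0\leq j\leq n$. Then for all integers $m\geq2$ and $0\leq l\leq\lfloor (m-1)/2\rfloor$, $$\frac{a_{2m-2,\,2m-l-2}}{a_{2m-2,\,l+m-1}}\leq\frac{a_{2m-1,\,2m-l-1}}{a_{2m-1,\,l+m-1}}\leq 8.$$ *)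

theory Defs
  imports Complex_Main
begin

definition aseq :: "nat \<Rightarrow> nat \<Rightarrow> nat \<Rightarrow> real" where
  "aseq c n j = real c ^ j * real (n choose j)"

end

theory Submission
  imports Defs
begin

text \<open>
  Write the ratios as a_{n,j} / a_{n,k}. Passing from (n, j, k) to (n+1, j+1, k) multiplies such a
  ratio by c (n+1-k) / (j+1), which is at least 1 in the ranges of the statement; this gives the
  chains of inequalities. For the upper bounds, moving the two indices one step towards each other
  divides the ratio by at most q = 1 + 3/(2m+1) (for c = 2) resp. q = 1 + 3/(m-1) (for c = 3), a
  polynomial inequality in the step position. At most m-1 resp. (m-1)/2 steps lead to an innermost
  ratio with an explicit value at most 8/5 resp. 3/2, and the accumulated factor is at most
  exp (3/2) < 5; the few small m not covered by these estimates are checked directly.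
\<close>

lemma aseq_nonneg: "0 \<le> aseq c n j"
  by (simp add: aseq_def)

lemma aseq_pos: "j \<le> n \<Longrightarrow> 0 < c \<Longrightarrow> 0 < aseq c n j"
  by (simp add: aseq_def)

lemma aseq_Suc: "aseq c n (Suc j) = aseq c n j * (real c * real (n - j) / real (Suc j))"
proof -
  have binom: "real (Suc j) * real (n choose Suc j) = real (n - j) * real (n choose j)"
    by (metis binomial_absorption binomial_absorb_comp of_nat_mult)
  have "aseq c n (Suc j) * real (Suc j)
      = real c * real c ^ j * (real (Suc j) * real (n choose Suc j))"
    by (simp add: aseq_def ac_simps del: of_nat_Suc)
  also have "\<dots> = aseq c n j * (real c * real (n - j))"
    unfolding binom by (simp add: aseq_def ac_simps)
  finally show ?thesis
    by (simp add: eq_divide_eq del: of_nat_Suc)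
qed

lemma aseq_Suc_Suc: "aseq c (Suc n) (Suc j) = aseq c n j * (real c * real (Suc n) / real (Suc j))"
proof -
  have binom: "real (Suc j) * real (Suc n choose Suc j) = real (Suc n) * real (n choose j)"
    by (metis Suc_times_binomial of_nat_mult)
  have "aseq c (Suc n) (Suc j) * real (Suc j)
      = real c * real c ^ j * (real (Suc j) * real (Suc n choose Suc j))"
    by (simp add: aseq_def ac_simps del: of_nat_Suc)
  also have "\<dots> = aseq c n j * (real c * real (Suc n))"
    unfolding binom by (simp add: aseq_def ac_simps del: of_nat_Suc)
  finally show ?thesis
    by (simp add: eq_divide_eq del: of_nat_Suc)
qed

lemma aseq_Suc_row:
  assumes "j \<le> n"
  shows "aseq c (Suc n) j = aseq c n j * (real (Suc n) / real (Suc n - j))"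
proof -
  have "real (Suc n - j) * real (Suc n choose j) = real (Suc n) * real (n choose j)"
    by (metis binomial_absorb_comp diff_Suc_1 of_nat_mult)
  then have "aseq c (Suc n) j * real (Suc n - j) = aseq c n j * real (Suc n)"
    unfolding aseq_def by (simp only: ac_simps)
  then show ?thesis
    using assms by (simp add: eq_divide_eq del: of_nat_Suc)
qed

lemma aseq_ratio_mono_row:
  assumes "k \<le> n" "0 < c" "Suc j \<le> c * (Suc n - k)"
  shows "aseq c n j / aseq c n k \<le> aseq c (Suc n) (Suc j) / aseq c (Suc n) k"
proof -
  have ratio: "aseq c (Suc n) (Suc j) / aseq c (Suc n) k
      = aseq c n j / aseq c n k * (real c * real (Suc n - k) / real (Suc j))"
    using aseq_pos[OF assms(1,2)] assms(1)
    unfolding aseq_Suc_Suc aseq_Suc_row[OF assms(1)]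
    by (simp add: field_simps del: of_nat_Suc)
  have factor: "1 \<le> real c * real (Suc n - k) / real (Suc j)"
  proof -
    have "real (Suc j) \<le> real c * real (Suc n - k)"
      using assms(3) by (metis of_nat_le_iff of_nat_mult)
    then show ?thesis
      by (simp only: le_divide_eq_1_pos of_nat_0_less_iff zero_less_Suc)
  qed
  have "0 \<le> aseq c n j / aseq c n k"
    by (simp add: aseq_nonneg)
  from mult_left_mono[OF factor this] show ?thesis
    unfolding ratio by simp
qed

lemma aseq_Suc_ratio:
  assumes "k \<le> n" "0 < c"
  shows "aseq c n (Suc k) / aseq c n k = real c * real (n - k) / real (Suc k)"
  using aseq_pos[OF assms] by (simp add: aseq_Suc)

lemma aseq_Suc_Suc_ratio:
  assumes "k < n" "0 < c"
  shows "aseq c n (Suc (Suc k)) / aseq c n k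
    = real c * real (n - Suc k) / real (Suc (Suc k)) * (real c * real (n - k) / real (Suc k))"
proof -
  have "0 < aseq c n (Suc k)"
    using assms by (intro aseq_pos) simp_all
  then have "aseq c n (Suc (Suc k)) / aseq c n k
      = aseq c n (Suc (Suc k)) / aseq c n (Suc k) * (aseq c n (Suc k) / aseq c n k)"
    by simp
  then show ?thesis
    using assms by (simp only: aseq_Suc_ratio Suc_leI less_imp_le)
qed

lemma aseq_ratio_shift_le:
  assumes "k < n" "0 < c"
    and factor: "real c * real (n - j) / real (Suc j) * (real c * real (n - k) / real (Suc k)) \<le> q"
  shows "aseq c n (Suc j) / aseq c n k \<le> q * (aseq c n j / aseq c n (Suc k))"
proof -
  define fj where "fj = real c * real (n - j) / real (Suc j)"
  define fk where "fk = real c * real (n - k) / real (Suc k)"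
  have "0 < fk" "0 < aseq c n k"
    using assms aseq_pos[of k n c] by (simp_all add: fk_def)
  then have "aseq c n (Suc j) / aseq c n k = fj * fk * (aseq c n j / aseq c n (Suc k))"
    unfolding aseq_Suc fj_def[symmetric] fk_def[symmetric] by (simp add: field_simps)
  also have "\<dots> \<le> q * (aseq c n j / aseq c n (Suc k))"
    using factor unfolding fj_def fk_def by (intro mult_right_mono) (simp_all add: aseq_nonneg)
  finally show ?thesis .
qed

lemma chain_le_power_mult:
  fixes R :: "nat \<Rightarrow> real"
  assumes "l \<le> L" "0 \<le> q" "\<And>i. l \<le> i \<Longrightarrow> i < L \<Longrightarrow> R i \<le> q * R (Suc i)"
  shows "R l \<le> q ^ (L - l) * R L"
  using assms(1)
proof (induction rule: inc_induct)
  case base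
  then show ?case by simp
next
  case (step i)
  have "R i \<le> q * R (Suc i)"
    using assms(3) step.hyps by blast
  also have "\<dots> \<le> q * (q ^ (L - Suc i) * R L)"
    using step.IH assms(2) by (rule mult_left_mono)
  also have "\<dots> = q ^ (L - i) * R L"
    using step.hyps by (simp add: Suc_diff_Suc flip: power_Suc)
  finally show ?case .
qed

lemma exp_three_halves_le: "exp (3/2::real) \<le> 5"
proof -
  have "exp (1/8::real) = inverse (exp (-1/8))"
    by (simp add: exp_minus)
  also have "\<dots> \<le> inverse (7/8)"
    using exp_ge_add_one_self[of "-1/8::real"] by (intro le_imp_inverse_le) auto
  finally have "exp (1/8::real) \<le> 8/7" by simp
  then have "exp (1/8::real) ^ 12 \<le> (8/7) ^ 12"
    by (rule power_mono) simp
  moreover have "exp (3/2::real) = exp (1/8) ^ 12"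
    by (simp flip: exp_of_nat_mult)
  moreover have "(8/7) ^ 12 \<le> (5::real)"
    by (simp add: power_divide)
  ultimately show ?thesis by linarith
qed

lemma one_plus_power_le_5:
  fixes x :: real
  assumes "0 \<le> x" "real k * x \<le> 3/2"
  shows "(1 + x) ^ k \<le> 5"
proof -
  have "(1 + x) ^ k \<le> exp x ^ k"
    using assms(1) by (intro power_mono) simp_all
  also have "\<dots> = exp (real k * x)"
    by (simp flip: exp_of_nat_mult)
  also have "\<dots> \<le> exp (3/2)"
    using assms(2) by simp
  finally show ?thesis
    using exp_three_halves_le by linarith
qed

lemma divide_le_divide_cross:
  fixes a b c d :: real
  assumes "0 < b" "0 < d" "a * d \<le> c * b"
  shows "a / b \<le> c / d"
  using assms by (simp add: field_simps)

lemma aseq_2_step_factor_le: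
  fixes l p :: nat
  shows "real (2 * (l+1)) / real (2*l+3*p+5) * (real (2 * (l+2*p+4)) / real (2*l+p+2))
    \<le> real (2*l+2*p+8) / real (2*l+2*p+5)"
proof -
  have "(2*l+2*p+8) * (2*l+3*p+5) * (2*l+p+2)
      = 4*(l+1)*(l+2*p+4)*(2*l+2*p+5) + (36*p + 18*l*p + 30*p^2 + 6*l*p^2 + 6*p^3)"
    by (simp add: algebra_simps power2_eq_square power3_eq_cube)
  then have "real (2 * (l+1)) * real (2 * (l+2*p+4)) * real (2*l+2*p+5)
      \<le> real (2*l+2*p+8) * (real (2*l+3*p+5) * real (2*l+p+2))"
    by (simp only: of_nat_mult [symmetric] of_nat_le_iff)
  then show ?thesis
    unfolding times_divide_times_eq by (intro divide_le_divide_cross) simp_all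
qed

lemma aseq_2_ratio_step:
  assumes "Suc l < m"
  shows "aseq 2 (3*m-1) (3*m-l-1) / aseq 2 (3*m-1) (l+m-1)
    \<le> real (2*m+4) / real (2*m+1) * (aseq 2 (3*m-1) (3*m - Suc l - 1) / aseq 2 (3*m-1) (Suc l + m - 1))"
proof -
  obtain p where m: "m = l + p + 2"
    using less_imp_Suc_add[OF assms] by fastforce
  have idx: "3*m-1 = 3*l+3*p+5" "3*m-l-1 = Suc (2*l+3*p+4)" "l+m-1 = 2*l+p+1"
    "3*m - Suc l - 1 = 2*l+3*p+4" "Suc l + m - 1 = Suc (2*l+p+1)"
    "real (2*m+4) / real (2*m+1) = real (2*l+2*p+8) / real (2*l+2*p+5)"
    using m by (simp_all add: algebra_simps)
  show ?thesis
    unfolding idx using aseq_2_step_factor_le[of l p]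
    by (intro aseq_ratio_shift_le) (simp_all add: algebra_simps)
qed

lemma aseq_2_top_ratio:
  assumes "2 \<le> m"
  shows "aseq 2 (3*m-1) (2*m) / aseq 2 (3*m-1) (2*m-2) = real (2*m+2) / real (2*m-1)"
proof -
  define k where "k = 2*m-2"
  have k: "k < 3*m-1" "3*m-1 - Suc k = m" "3*m-1 - k = m+1" "Suc k = 2*m-1" "Suc (Suc k) = 2*m"
    using assms by (simp_all add: k_def)
  have "aseq 2 (3*m-1) (2*m) / aseq 2 (3*m-1) k
      = real 2 * real m / real (2*m) * (real 2 * real (m+1) / real (2*m-1))"
    using aseq_Suc_Suc_ratio[OF k(1), of 2] unfolding k(5) unfolding k(2-4) by simp
  also have "\<dots> = real (2*m+2) / real (2*m-1)"
    using assms by simp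
  finally show ?thesis
    unfolding k_def .
qed

lemma aseq_2_ratio_le_9:
  assumes m: "2 \<le> m" and l: "l \<le> m - 1"
  shows "aseq 2 (3*m-1) (3*m-l-1) / aseq 2 (3*m-1) (l+m-1) \<le> 9"
proof -
  define R where "R i = aseq 2 (3*m-1) (3*m-i-1) / aseq 2 (3*m-1) (i+m-1)" for i
  define q where "q = real (2*m+4) / real (2*m+1)"
  have q: "q = 1 + 3 / real (2*m+1)" "1 \<le> q"
    unfolding q_def by (simp_all add: field_simps)
  have "R l \<le> q ^ (m-1-l) * R (m-1)"
  proof (rule chain_le_power_mult)
    fix i
    assume "i < m - 1"
    then show "R i \<le> q * R (Suc i)"
      unfolding R_def q_def by (intro aseq_2_ratio_step) simp
  qed (use l q in simp_all)
  also have "\<dots> \<le> q ^ (m-1) * R (m-1)"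
    using q(2) by (intro mult_right_mono power_increasing) (simp_all add: R_def aseq_nonneg)
  also have "R (m-1) = real (2*m+2) / real (2*m-1)"
  proof -
    have "3*m - (m-1) - 1 = 2*m" "(m-1) + m - 1 = 2*m-2"
      using m by simp_all
    then show ?thesis
      unfolding R_def using aseq_2_top_ratio[OF m] by simp
  qed
  also have "q ^ (m-1) * (real (2*m+2) / real (2*m-1)) \<le> 9"
  proof (cases "m = 2")
    case True
    then show ?thesis by (simp add: q_def)
  next
    case False
    have "real (m-1) * (3 / real (2*m+1)) \<le> 3/2"
      using m by (simp add: field_simps of_nat_diff)
    then have "q ^ (m-1) \<le> 5"
      unfolding q(1) by (intro one_plus_power_le_5) simp_all
    moreover have "real (2*m+2) / real (2*m-1) \<le> 8/5"
      using m False by (simp add: divide_le_eq of_nat_diff)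
    ultimately have "q ^ (m-1) * (real (2*m+2) / real (2*m-1)) \<le> 5 * (8/5)"
      by (intro mult_mono) simp_all
    then show ?thesis by simp
  qed
  finally show ?thesis
    by (simp add: R_def)
qed

lemma aseq_3_step_factor_le:
  fixes l p :: nat
  shows "real (3 * (l+1)) / real (3*l+2*p+5) * (real (3 * (l+p+3)) / real (3*l+p+3))
    \<le> real (2*l+p+5) / real (2*l+p+2)"
proof -
  have "(2*l+p+5) * (3*l+2*p+5) * (3*l+p+3)
      = 9*(l+1)*(l+p+3)*(2*l+p+2)
        + (21 + 24*l + 25*p + 3*l^2 + 19*l*p + 12*p^2 + 4*l*p^2 + 2*p^3)"
    by (simp add: algebra_simps power2_eq_square power3_eq_cube)
  then have "real (3 * (l+1)) * real (3 * (l+p+3)) * real (2*l+p+2)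
      \<le> real (2*l+p+5) * (real (3*l+2*p+5) * real (3*l+p+3))"
    by (simp only: of_nat_mult [symmetric] of_nat_le_iff)
  then show ?thesis
    unfolding times_divide_times_eq by (intro divide_le_divide_cross) simp_all
qed

lemma aseq_3_ratio_step:
  assumes "2*l + 3 \<le> m"
  shows "aseq 3 (2*m-1) (2*m-l-1) / aseq 3 (2*m-1) (l+m-1)
    \<le> real (m+2) / real (m-1) * (aseq 3 (2*m-1) (2*m - Suc l - 1) / aseq 3 (2*m-1) (Suc l + m - 1))"
proof -
  obtain p where m: "m = 2*l + 3 + p"
    using le_Suc_ex[OF assms] by blast
  have idx: "2*m-1 = 4*l+2*p+5" "2*m-l-1 = Suc (3*l+2*p+4)" "l+m-1 = 3*l+p+2"
    "2*m - Suc l - 1 = 3*l+2*p+4" "Suc l + m - 1 = Suc (3*l+p+2)"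
    "real (m+2) / real (m-1) = real (2*l+p+5) / real (2*l+p+2)"
    using m by (simp_all add: algebra_simps)
  show ?thesis
    unfolding idx using aseq_3_step_factor_le[of l p]
    by (intro aseq_ratio_shift_le) (simp_all add: algebra_simps)
qed

lemma aseq_3_top_ratio:
  assumes "2 \<le> m" "L = (m-1) div 2"
  shows "aseq 3 (2*m-1) (2*m-L-1) / aseq 3 (2*m-1) (L+m-1) = 3 * real (m-L) / real (m+L)"
proof -
  consider (odd) "m = 2*L+1" | (even) "m = 2*L+2"
    using assms by linarith
  then show ?thesis
  proof cases
    case odd
    have "3*L < 4*L+1" by simp
    from aseq_Suc_ratio[OF less_imp_le[OF this], of 3] show ?thesis
      using odd by (simp add: algebra_simps)
  next
    case even
    have idx: "2*m-1 = 4*L+3" "2*m-L-1 = Suc (Suc (3*L+1))" "L+m-1 = 3*L+1"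
      "real (m-L) = real (L+2)" "real (m+L) = real (3*L+2)"
      using even by simp_all
    have "aseq 3 (4*L+3) (Suc (Suc (3*L+1))) / aseq 3 (4*L+3) (3*L+1)
        = real 3 * real (4*L+3 - Suc (3*L+1)) / real (Suc (Suc (3*L+1)))
          * (real 3 * real (4*L+3 - (3*L+1)) / real (Suc (3*L+1)))"
      by (rule aseq_Suc_Suc_ratio) simp_all
    also have "\<dots> = 3 * real (L+2) / real (3*L+2)"
      by (simp add: field_simps)
    finally show ?thesis
      unfolding idx .
  qed
qed

lemma aseq_3_ratio_le_8:
  assumes m: "2 \<le> m" and l: "l \<le> (m-1) div 2"
  shows "aseq 3 (2*m-1) (2*m-l-1) / aseq 3 (2*m-1) (l+m-1) \<le> 8"
proof -
  define L where "L = (m-1) div 2"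
  define R where "R i = aseq 3 (2*m-1) (2*m-i-1) / aseq 3 (2*m-1) (i+m-1)" for i
  define q where "q = real (m+2) / real (m-1)"
  have L: "2*L + 1 \<le> m" "m \<le> 2*L + 2"
    using m unfolding L_def by simp_all
  have q: "q = 1 + 3 / real (m-1)" "1 \<le> q"
    unfolding q_def using m by (simp_all add: field_simps of_nat_diff)
  have "R l \<le> q ^ (L-l) * R L"
  proof (rule chain_le_power_mult)
    fix i
    assume "i < L"
    then show "R i \<le> q * R (Suc i)"
      unfolding R_def q_def using L by (intro aseq_3_ratio_step) simp
  qed (use l q in \<open>simp_all add: L_def\<close>)
  also have "\<dots> \<le> q ^ L * R L"
    using q(2) by (intro mult_right_mono power_increasing) (simp_all add: R_def aseq_nonneg)
  also have "R L = 3 * real (m-L) / real (m+L)"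
    unfolding R_def using aseq_3_top_ratio[OF m L_def] .
  also have "q ^ L * (3 * real (m-L) / real (m+L)) \<le> 8"
  proof (cases "2 \<le> L")
    case True
    have "real L * (3 / real (m-1)) \<le> 3/2"
      using L m by (simp add: field_simps of_nat_diff)
    then have "q ^ L \<le> 5"
      unfolding q(1) by (intro one_plus_power_le_5) simp_all
    moreover have "3 * real (m-L) / real (m+L) \<le> 3/2"
      using L True by (simp add: divide_le_eq of_nat_diff)
    ultimately have "q ^ L * (3 * real (m-L) / real (m+L)) \<le> 5 * (3/2)"
      by (intro mult_mono) simp_all
    then show ?thesis by simp
  next
    case False
    then have "m = 2 \<or> m = 3 \<or> m = 4"
      using L m by linarith
    then show ?thesis
      by (auto simp: L_def q_def)
  qed
  finally show ?thesis
    by (simp add: R_def)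
qed

theorem lemma3p5:
  shows "(\<forall>m l :: nat. m \<ge> 2 \<and> l \<le> m - 1 \<longrightarrow>
            aseq 2 (3*m-3) (3*m-l-3) / aseq 2 (3*m-3) (l+m-1)
              \<le> aseq 2 (3*m-2) (3*m-l-2) / aseq 2 (3*m-2) (l+m-1)
          \<and> aseq 2 (3*m-2) (3*m-l-2) / aseq 2 (3*m-2) (l+m-1)
              \<le> aseq 2 (3*m-1) (3*m-l-1) / aseq 2 (3*m-1) (l+m-1)
          \<and> aseq 2 (3*m-1) (3*m-l-1) / aseq 2 (3*m-1) (l+m-1) \<le> 9)
       \<and> (\<forall>m l :: nat. m \<ge> 2 \<and> l \<le> (m - 1) div 2 \<longrightarrow>
            aseq 3 (2*m-2) (2*m-l-2) / aseq 3 (2*m-2) (l+m-1)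
              \<le> aseq 3 (2*m-1) (2*m-l-1) / aseq 3 (2*m-1) (l+m-1)
          \<and> aseq 3 (2*m-1) (2*m-l-1) / aseq 3 (2*m-1) (l+m-1) \<le> 8)"
proof (intro conjI allI impI; elim conjE)
  fix m l :: nat
  assume m: "2 \<le> m" and l: "l \<le> m - 1"
  have idx: "3*m-2 = Suc (3*m-3)" "3*m-l-2 = Suc (3*m-l-3)"
    "3*m-1 = Suc (3*m-2)" "3*m-l-1 = Suc (3*m-l-2)"
    using m l by simp_all
  show "aseq 2 (3*m-3) (3*m-l-3) / aseq 2 (3*m-3) (l+m-1)
      \<le> aseq 2 (3*m-2) (3*m-l-2) / aseq 2 (3*m-2) (l+m-1)"
    unfolding idx(1,2) using m l by (intro aseq_ratio_mono_row) simp_all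
  show "aseq 2 (3*m-2) (3*m-l-2) / aseq 2 (3*m-2) (l+m-1)
      \<le> aseq 2 (3*m-1) (3*m-l-1) / aseq 2 (3*m-1) (l+m-1)"
    unfolding idx(3,4) using m l by (intro aseq_ratio_mono_row) simp_all
  show "aseq 2 (3*m-1) (3*m-l-1) / aseq 2 (3*m-1) (l+m-1) \<le> 9"
    using m l by (rule aseq_2_ratio_le_9)
next
  fix m l :: nat
  assume m: "2 \<le> m" and l: "l \<le> (m - 1) div 2"
  have "2*l < m"
    using l m by linarith
  have idx: "2*m-1 = Suc (2*m-2)" "2*m-l-1 = Suc (2*m-l-2)"
    using m l by simp_all
  show "aseq 3 (2*m-2) (2*m-l-2) / aseq 3 (2*m-2) (l+m-1)
      \<le> aseq 3 (2*m-1) (2*m-l-1) / aseq 3 (2*m-1) (l+m-1)"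
    unfolding idx using m \<open>2*l < m\<close> by (intro aseq_ratio_mono_row) simp_all
  show "aseq 3 (2*m-1) (2*m-l-1) / aseq 3 (2*m-1) (l+m-1) \<le> 8"
    using m l by (rule aseq_3_ratio_le_8)
qed

end
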